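(* Let $n\ge 2$, $d\ge1$, $r\ge3$ with $n\ge d$, $dr\equiv0\pmod n$ and $dr\ge 2n$. For every vertex $(a,x)$ of $Q_n(d,r)$ with $0\le x\le\lfloor r/2\rfloor$, $$\mathrm{dist}((0_n,0),(a,x))=\|a\|+2\lceil n/d\rceil-x-2\,\mathrm{leap}_1(a,x).$$
   Context: $\mathbb{Z}_2^n=\{0,1\}^n$ with coordinatewise addition mod 2; $e_i$ is the $i$-th standard basis vector, subscripts read modulo $n$; $\|a\|$ is the Hamming weight. The recursive cube of rings $Q_n(d,r)$ is the simple graph on $\mathbb{Z}_2^n\times\mathbb{Z}_r$ in which $(a,x)$ is adjacent to $(a+e_{i+dx},x)$ for $1\le i\le d$ and to $(a,x\pm1)$. Definition of $\mathrm{leap}_1$ (case $dr\ge 2n$): let $q=\lceil n/d\rceil$, $s=\|a\|$, and let $i_1<i_2<\dots<i_s$ be the indices with $a_i=1$. Put $y_0=0$, and for $1\le t\le s$ put $y_t=\lfloor (i_t-1)/d\rfloor$, $z_t=\lfloor (i_t+dr-n-1)/d\rfloor$ and $q_t=z_t-y_t-r+q$ (which lies in $\{0,1\}$). For $0\le x\le\lfloor r/2\rfloor$: if $y_s\le x$ (in particular if $s=0$), then $\mathrm{leap}_1(a,x)=q-x$; otherwise let $h\in\{1,\dots,s\}$ be the index with $y_{h-1}\le x<y_h$ and set $\mathrm{leap}_1(a,x)=\max\big(\{y_h-x+q_h\}\cup\{y_j-y_{j-1}+q_j: h<j\le s\}\cup\{q-y_s\}\big)$. *)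

theory Defs
  imports Main
begin

text \<open>Vertices of Q_n(d,r): pairs (a, x), where a \<subseteq> {1..n} is the support of a
  binary vector of length n (so the Hamming weight is card a) and x \<in> {0..<r}
  represents an element of Z_r.\<close>

definition is_vertex :: "nat \<Rightarrow> nat \<Rightarrow> nat set \<times> nat \<Rightarrow> bool" where
  "is_vertex n r v \<longleftrightarrow> fst v \<subseteq> {1..n} \<and> snd v < r"

definition idx_mod :: "nat \<Rightarrow> nat \<Rightarrow> nat" where
  "idx_mod n j = ((j - 1) mod n) + 1"

definition flip :: "nat set \<Rightarrow> nat \<Rightarrow> nat set" where
  "flip a j = (if j \<in> a then a - {j} else insert j a)"

definition rcr_adj :: "nat \<Rightarrow> nat \<Rightarrow> nat \<Rightarrow> nat set \<times> nat \<Rightarrow> nat set \<times> nat \<Rightarrow> bool" where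
  "rcr_adj n d r v w \<longleftrightarrow> is_vertex n r v \<and> is_vertex n r w \<and> v \<noteq> w \<and>
     ((snd w = snd v \<and> (\<exists>i\<in>{1..d}. fst w = flip (fst v) (idx_mod n (i + d * snd v))))
    \<or> (\<exists>i\<in>{1..d}. fst v = flip (fst w) (idx_mod n (i + d * snd w))) \<and> snd w = snd v
    \<or> (fst w = fst v \<and> (snd w = (snd v + 1) mod r \<or> snd v = (snd w + 1) mod r)))"

definition rcr_dist :: "nat \<Rightarrow> nat \<Rightarrow> nat \<Rightarrow> nat set \<times> nat \<Rightarrow> nat set \<times> nat \<Rightarrow> nat" where
  "rcr_dist n d r v w = (LEAST k. (rcr_adj n d r ^^ k) v w)"

definition leap1 :: "nat \<Rightarrow> nat \<Rightarrow> nat \<Rightarrow> nat set \<Rightarrow> nat \<Rightarrow> int" where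
  "leap1 n d r a x =
    (let q = int ((n + d - 1) div d);
         L = sorted_list_of_set a;
         s = length L;
         y = (\<lambda>t. if t = 0 then 0 else int ((L ! (t - 1) - 1) div d));
         z = (\<lambda>t. int ((L ! (t - 1) + d * r - n - 1) div d));
         qq = (\<lambda>t. z t - y t - int r + q)
     in if s = 0 \<or> y s \<le> int x then q - int x
        else (let h = (LEAST h. 1 \<le> h \<and> h \<le> s \<and> y (h - 1) \<le> int x \<and> int x < y h)
              in Max ({y h - int x + qq h} \<union> {y j - y (j - 1) + qq j | j. h < j \<and> j \<le> s}
                      \<union> {q - y s})))"

end

theory Submission
  imports Defs
begin

text \<open>A walk from \<open>(0, 0)\<close> to \<open>(a, x)\<close> must flip every bit of \<open>a\<close> at a ring position
  covering it, so its projection to the ring, lifted to \<open>\<int>\<close>, sweeps an interval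
  \<open>[lo, hi] \<ni> 0\<close> and ends at some \<open>p \<equiv> x (mod r)\<close>; this costs at least
  \<open>\<parallel>a\<parallel> + 2 (hi - lo) - \<bar>p\<bar>\<close> steps. The least such bound is a potential that changes by at
  most one along each edge and that some edge decreases at every vertex except the origin,
  hence it is the distance. For \<open>x \<le> \<lfloor>r/2\<rfloor>\<close> an optimal sweep ends at \<open>p = x\<close> and is
  shorter than \<open>r\<close>, so each bit is covered either in \<open>[0, hi]\<close>, at its first covering
  position \<open>y\<close>, or through the wrap-around in \<open>[lo, 0)\<close>, at its last covering position
  \<open>z\<close>. Along the sorted bits \<open>y\<close> and \<open>z\<close> are monotone, so the narrowest such split is
  found among the windows that switch from \<open>y\<close> to \<open>z\<close> at one bit, and
  \<open>leap\<^sub>1(a, x)\<close> is \<open>\<lceil>n/d\<rceil>\<close> minus its width.\<close>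

locale rcr_params =
  fixes n d r :: nat
  assumes n_ge_2: "n \<ge> 2" and d_ge_1: "d \<ge> 1" and r_ge_3: "r \<ge> 3"
    and n_dvd_dr: "(d * r) mod n = 0" and dr_ge_2n: "d * r \<ge> 2 * n"
begin

definition covers :: "nat \<Rightarrow> nat \<Rightarrow> bool" where
  "covers P i \<longleftrightarrow> (\<exists>k\<in>{1..d}. idx_mod n (k + d * P) = i)"

text \<open>The least and the greatest ring position in \<open>{0..<r}\<close> covering bit \<open>i\<close>
  (the \<open>y\<^sub>t\<close> and \<open>z\<^sub>t\<close> of the definition of \<open>leap\<^sub>1\<close>).\<close>

definition first_cover :: "nat \<Rightarrow> int" where
  "first_cover i = int ((i - 1) div d)"

definition last_cover :: "nat \<Rightarrow> int" where
  "last_cover i = int ((i + d * r - n - 1) div d)"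

lemma first_cover_nonneg [simp]: "0 \<le> first_cover i"
  by (simp add: first_cover_def)

lemma last_cover_nonneg [simp]: "0 \<le> last_cover i"
  by (simp add: last_cover_def)

lemma covers_idx_mod: "k \<in> {1..d} \<Longrightarrow> covers P (idx_mod n (k + d * P))"
  unfolding covers_def by auto

lemma div_d_less_r: "m < n \<Longrightarrow> m div d < r"
  using dr_ge_2n n_ge_2 by (simp add: less_mult_imp_div_less mult.commute)

lemma covers_first_cover:
  assumes "i \<in> {1..n}" shows "covers (nat (first_cover i)) i"
proof -
  have "(i - 1) mod d + 1 + d * ((i - 1) div d) = i"
    using assms by simp
  moreover have "(i - 1) mod d + 1 \<in> {1..d}"
    using d_ge_1 by (simp add: Suc_leI)
  moreover have "idx_mod n i = i"
    using assms unfolding idx_mod_def by auto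
  ultimately show ?thesis
    unfolding covers_def first_cover_def by force
qed

lemma first_cover_less: "i \<in> {1..n} \<Longrightarrow> first_cover i < int r"
  using div_d_less_r[of "i - 1"] by (auto simp: first_cover_def)

lemma first_cover_le_max: "i \<in> {1..n} \<Longrightarrow> first_cover i \<le> int ((n - 1) div d)"
  by (auto simp: first_cover_def intro: div_le_mono)

lemma dr_eq_n_mult:
  obtains K where "d * r = n * K" "K \<ge> 2"
proof -
  obtain K where K: "d * r = n * K"
    using n_dvd_dr by auto
  then have "K \<ge> 2"
    using dr_ge_2n n_ge_2 by simp
  with K that show ?thesis by blast
qed

lemma covers_last_cover:
  assumes i: "i \<in> {1..n}" shows "covers (nat (last_cover i)) i"
proof -
  obtain K where K: "d * r = n * K" "K \<ge> 2"
    by (rule dr_eq_n_mult)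
  define g where "g = i + d * r - n - 1"
  have "g = (i - 1) + n * (K - 1)"
    using K i unfolding g_def by (auto simp: algebra_simps diff_mult_distrib2)
  then have "g mod n = (i - 1) mod n"
    by (simp only: mod_mult_self2)
  moreover have "i - 1 < n"
    using i by auto
  ultimately have "g mod n = i - 1"
    by simp
  then have "idx_mod n (g mod d + 1 + d * (g div d)) = i"
    using i unfolding idx_mod_def by auto
  moreover have "g mod d + 1 \<in> {1..d}"
    using d_ge_1 by (simp add: Suc_leI)
  ultimately show ?thesis
    unfolding covers_def last_cover_def g_def[symmetric] by force
qed

lemma last_cover_less: "i \<in> {1..n} \<Longrightarrow> last_cover i < int r"
  using dr_ge_2n by (auto simp: last_cover_def less_mult_imp_div_less mult.commute)

text \<open>A position \<open>P < r\<close> covers bit \<open>i\<close> iff \<open>d P + k - 1 \<equiv> i - 1 (mod n)\<close> for some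
  \<open>1 \<le> k \<le> d\<close>; as \<open>d P + k - 1 < d r\<close> and \<open>n\<close> divides \<open>d r\<close>, this number then lies between
  \<open>i - 1\<close> and \<open>i - 1 + d r - n\<close>.\<close>

lemma covers_between_covers:
  assumes cov: "covers P i" and P: "P < r" and i: "i \<in> {1..n}"
  shows "first_cover i \<le> int P" and "int P \<le> last_cover i"
proof -
  obtain K where K: "d * r = n * K" "K \<ge> 2"
    by (rule dr_eq_n_mult)
  obtain k where k: "k \<in> {1..d}" "idx_mod n (k + d * P) = i"
    using cov unfolding covers_def by auto
  define g where "g = k + d * P - 1"
  have "g mod n = i - 1"
    using k i unfolding idx_mod_def g_def by auto
  then have g_eq: "g = n * (g div n) + (i - 1)" and "i - 1 \<le> g"
    by (metis div_mult_mod_eq mult.commute, metis mod_less_eq_dividend)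
  have "d * (P + 1) \<le> d * r"
    using P by (intro mult_le_mono2) simp
  then have g_less: "g < d * r"
    using k unfolding g_def by (auto simp: algebra_simps)
  have "i - 1 < d * (P + 1)"
    using \<open>i - 1 \<le> g\<close> k unfolding g_def by auto
  then have "(i - 1) div d < P + 1"
    by (simp add: less_mult_imp_div_less mult.commute)
  then show "first_cover i \<le> int P"
    unfolding first_cover_def by simp
  have "g div n < K"
    using g_eq g_less K(1) by (metis add_lessD1 mult_less_cancel1)
  then have "n * (g div n) \<le> n * (K - 1)"
    by (intro mult_le_mono2) linarith
  then have "n * (g div n) \<le> d * r - n"
    using K(1) by (simp add: diff_mult_distrib2)
  moreover have "d * P \<le> g"
    using k unfolding g_def by auto
  ultimately have "d * P \<le> i + d * r - n - 1"
    using g_eq i dr_ge_2n by (simp only: atLeastAtMost_iff) linarith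
  then show "int P \<le> last_cover i"
    unfolding last_cover_def using d_ge_1 by (simp add: less_eq_div_iff_mult_less_eq mult.commute)
qed

text \<open>A sweep \<open>(lo, hi, p)\<close> stands for a walk on the ring, lifted to \<open>\<int>\<close>, that starts at \<open>0\<close>,
  visits exactly the positions in \<open>[lo, hi]\<close> and stops at \<open>p\<close>; the shortest such walk has length
  \<open>2 (hi - lo) - \<bar>p\<bar>\<close>.\<close>

definition covering :: "nat set \<Rightarrow> int \<Rightarrow> int \<Rightarrow> bool" where
  "covering A lo hi \<longleftrightarrow> (\<forall>i\<in>A. \<exists>p. lo \<le> p \<and> p \<le> hi \<and> covers (nat (p mod int r)) i)"

definition sweep :: "nat set \<Rightarrow> nat \<Rightarrow> int \<Rightarrow> int \<Rightarrow> int \<Rightarrow> bool" where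
  "sweep A x lo hi p \<longleftrightarrow>
     lo \<le> 0 \<and> 0 \<le> hi \<and> lo \<le> p \<and> p \<le> hi \<and> p mod int r = int x \<and> covering A lo hi"

definition ring_cost :: "nat set \<Rightarrow> nat \<Rightarrow> nat" where
  "ring_cost A x = (LEAST c. \<exists>lo hi p. sweep A x lo hi p \<and> int c = 2 * (hi - lo) - \<bar>p\<bar>)"

definition potential :: "nat set \<times> nat \<Rightarrow> nat" where
  "potential v = card (fst v) + ring_cost (fst v) (snd v)"

lemma sweep_cost_nonneg: "sweep A x lo hi p \<Longrightarrow> 0 \<le> 2 * (hi - lo) - \<bar>p\<bar>"
  by (auto simp: sweep_def abs_if)

lemma sweep_whole_ring:
  assumes "A \<subseteq> {1..n}" "x < r" shows "sweep A x 0 (int r - 1) (int x)"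
proof -
  have "covering A 0 (int r - 1)"
    unfolding covering_def
  proof
    fix i assume "i \<in> A"
    then have i: "i \<in> {1..n}"
      using assms(1) by auto
    then show "\<exists>p. 0 \<le> p \<and> p \<le> int r - 1 \<and> covers (nat (p mod int r)) i"
      using first_cover_less[OF i] covers_first_cover[OF i]
      by (intro exI[of _ "first_cover i"]) simp
  qed
  then show ?thesis
    using assms(2) unfolding sweep_def by simp
qed

lemma ring_cost_le:
  assumes "sweep A x lo hi p" shows "int (ring_cost A x) \<le> 2 * (hi - lo) - \<bar>p\<bar>"
proof -
  have nonneg: "0 \<le> 2 * (hi - lo) - \<bar>p\<bar>"
    using assms by (rule sweep_cost_nonneg)
  then have "ring_cost A x \<le> nat (2 * (hi - lo) - \<bar>p\<bar>)"
    unfolding ring_cost_def using assms by (intro Least_le) auto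
  then show ?thesis
    using nonneg by linarith
qed

lemma ring_cost_attained:
  assumes "A \<subseteq> {1..n}" "x < r"
  obtains lo hi p where "sweep A x lo hi p" "int (ring_cost A x) = 2 * (hi - lo) - \<bar>p\<bar>"
proof -
  have "\<exists>c lo hi p. sweep A x lo hi p \<and> int c = 2 * (hi - lo) - \<bar>p\<bar>"
    using sweep_whole_ring[OF assms] sweep_cost_nonneg[OF sweep_whole_ring[OF assms]]
    by (intro exI[of _ "nat (2 * (int r - 1) - int x)"] exI[of _ 0] exI[of _ "int r - 1"]
        exI[of _ "int x"]) auto
  then have "\<exists>lo hi p. sweep A x lo hi p \<and> int (ring_cost A x) = 2 * (hi - lo) - \<bar>p\<bar>"
    unfolding ring_cost_def by (rule LeastI_ex)
  then show ?thesis
    using that by blast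
qed

lemma ring_cost_mono:
  assumes "B \<subseteq> A" "A \<subseteq> {1..n}" "x < r" shows "ring_cost B x \<le> ring_cost A x"
proof -
  obtain lo hi p where "sweep A x lo hi p" "int (ring_cost A x) = 2 * (hi - lo) - \<bar>p\<bar>"
    using ring_cost_attained[OF assms(2,3)] .
  moreover from this(1) have "sweep B x lo hi p"
    using assms(1) by (auto simp: sweep_def covering_def)
  ultimately show ?thesis
    using ring_cost_le by force
qed

lemma ring_cost_insert:
  assumes "covers x j" "A \<subseteq> {1..n}" "x < r" shows "ring_cost (insert j A) x \<le> ring_cost A x"
proof -
  obtain lo hi p where "sweep A x lo hi p" "int (ring_cost A x) = 2 * (hi - lo) - \<bar>p\<bar>"
    using ring_cost_attained[OF assms(2,3)] .
  moreover from this(1) have "sweep (insert j A) x lo hi p"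
    using assms(1) by (auto simp: sweep_def covering_def intro!: exI[of _ p])
  ultimately show ?thesis
    using ring_cost_le by force
qed

lemma mod_succ: "p mod int r = int x \<Longrightarrow> (p + 1) mod int r = int ((x + 1) mod r)"
  by (metis Suc_eq_plus1 int_ops(4) mod_add_left_eq of_nat_mod)

lemma mod_pred:
  assumes "p mod int r = int ((x + 1) mod r)" "x < r" shows "(p - 1) mod int r = int x"
proof -
  have "(p - 1) mod int r = (p mod int r - 1) mod int r"
    by (simp add: mod_diff_left_eq)
  also have "\<dots> = ((int x + 1) mod int r - 1) mod int r"
    using assms(1) by (simp add: of_nat_mod add.commute)
  also have "\<dots> = int x"
    using assms(2) by (simp add: mod_diff_left_eq)
  finally show ?thesis .
qed

lemma ring_cost_succ:
  assumes "A \<subseteq> {1..n}" "x < r" shows "ring_cost A ((x + 1) mod r) \<le> ring_cost A x + 1"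
proof -
  obtain lo hi p where sw: "sweep A x lo hi p" and c: "int (ring_cost A x) = 2 * (hi - lo) - \<bar>p\<bar>"
    using ring_cost_attained[OF assms] .
  then have "sweep A ((x + 1) mod r) lo (max hi (p + 1)) (p + 1)"
    using mod_succ[of p x] unfolding sweep_def covering_def
    by (auto simp: abs_if) (meson le_max_iff_disj order_trans)
  moreover have "2 * (max hi (p + 1) - lo) - \<bar>p + 1\<bar> \<le> 2 * (hi - lo) - \<bar>p\<bar> + 1"
    using sw unfolding sweep_def by (auto simp: max_def abs_if)
  ultimately show ?thesis
    using ring_cost_le c by fastforce
qed

lemma ring_cost_pred:
  assumes "A \<subseteq> {1..n}" "x = (x' + 1) mod r" "x' < r" shows "ring_cost A x' \<le> ring_cost A x + 1"
proof -
  have "x < r"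
    using assms(2) r_ge_3 by simp
  then obtain lo hi p where sw: "sweep A x lo hi p"
    and c: "int (ring_cost A x) = 2 * (hi - lo) - \<bar>p\<bar>"
    using ring_cost_attained[OF assms(1)] by blast
  then have "sweep A x' (min lo (p - 1)) hi (p - 1)"
    using assms mod_pred[of p x'] unfolding sweep_def covering_def
    by (auto simp: abs_if) (meson min.coboundedI1 order_trans)
  moreover have "2 * (hi - min lo (p - 1)) - \<bar>p - 1\<bar> \<le> 2 * (hi - lo) - \<bar>p\<bar> + 1"
    using sw unfolding sweep_def by (auto simp: min_def abs_if)
  ultimately show ?thesis
    using ring_cost_le c by fastforce
qed

lemma flip_flip: "flip (flip a j) j = a"
  unfolding flip_def by auto

lemma potential_flip:
  assumes "A \<subseteq> {1..n}" "covers x j" "x < r"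
  shows "potential (flip A j, x) \<le> potential (A, x) + 1"
proof (cases "j \<in> A")
  case True
  then show ?thesis
    using ring_cost_mono[of "A - {j}", OF _ assms(1,3)] card_Diff1_le[of A j]
    by (simp add: potential_def flip_def)
next
  case False
  moreover have "finite A"
    using assms(1) finite_subset by blast
  ultimately show ?thesis
    using ring_cost_insert[OF assms(2,1,3)] by (simp add: potential_def flip_def)
qed

lemma potential_edge:
  assumes "rcr_adj n d r v w" shows "potential w \<le> potential v + 1"
proof -
  obtain A x B y where v: "v = (A, x)" and w: "w = (B, y)"
    by (cases v, cases w)
  have A: "A \<subseteq> {1..n}" "x < r" and B: "B \<subseteq> {1..n}" "y < r"
    using assms unfolding rcr_adj_def is_vertex_def v w by auto
  consider (flip) i where "i \<in> {1..d}" "y = x" "B = flip A (idx_mod n (i + d * x))"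
    | (succ) "B = A" "y = (x + 1) mod r"
    | (pred) "B = A" "x = (y + 1) mod r"
  proof -
    have "y = x \<and> (\<exists>i\<in>{1..d}. B = flip A (idx_mod n (i + d * x))
                      \<or> A = flip B (idx_mod n (i + d * y)))
      \<or> B = A \<and> (y = (x + 1) mod r \<or> x = (y + 1) mod r)"
      using assms unfolding rcr_adj_def v w by auto
    then show ?thesis
      using that flip_flip by metis
  qed
  then show ?thesis
  proof cases
    case flip
    then show ?thesis
      using potential_flip[OF A(1) covers_idx_mod A(2)] v w by simp
  next
    case succ
    then show ?thesis
      using ring_cost_succ[OF A] v w by (simp add: potential_def)
  next
    case pred
    then show ?thesis
      using ring_cost_pred[OF A(1) pred(2) B(2)] v w by (simp add: potential_def)
  qed
qed

lemma mod_succ_neq: "(p + 1) mod int r \<noteq> p mod int r"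
proof
  assume "(p + 1) mod int r = p mod int r"
  then have "int r dvd 1"
    by (metis add_diff_cancel_left' mod_eq_dvd_iff)
  then show False
    using r_ge_3 by simp
qed

lemma ring_neighbour:
  assumes "p mod int r = int x" "p' = p + 1 \<or> p' = p - 1"
  shows "nat (p' mod int r) < r" "nat (p' mod int r) \<noteq> x"
    "nat (p' mod int r) = (x + 1) mod r \<or> x = (nat (p' mod int r) + 1) mod r"
proof -
  define x' where "x' = nat (p' mod int r)"
  have r_pos: "0 < int r"
    using r_ge_3 by simp
  then have x': "int x' = p' mod int r"
    unfolding x'_def by simp
  moreover have "p' mod int r < int r"
    using r_pos by simp
  ultimately show "nat (p' mod int r) < r"
    unfolding x'_def by linarith
  have "p' mod int r \<noteq> p mod int r"
    using assms(2) mod_succ_neq[of p] mod_succ_neq[of "p - 1"] by auto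
  then show "nat (p' mod int r) \<noteq> x"
    using assms(1) x' x'_def by auto
  from assms(2) show "x' = (x + 1) mod r \<or> x = (x' + 1) mod r"
  proof
    assume "p' = p + 1"
    then show ?thesis
      using x' mod_succ[OF assms(1)] by simp
  next
    assume "p' = p - 1"
    then have "int x = int ((x' + 1) mod r)"
      using mod_succ[of p' x'] x' assms(1) by simp
    then show ?thesis
      by simp
  qed
qed

text \<open>Moving \<open>p\<close> one step away from \<open>0\<close> inside \<open>[lo, hi]\<close> shortens the walk; if \<open>p\<close>
  is an end point of the interval, no bit needs it and it can be dropped.\<close>

lemma sweep_shorten:
  assumes sw: "sweep A x lo hi p" and uncovered: "\<forall>j\<in>A. \<not> covers x j"
    and nonzero: "(A, x) \<noteq> ({}, 0)"
  obtains p' lo' hi' where "p' = p + 1 \<or> p' = p - 1" "lo' \<le> 0" "0 \<le> hi'" "lo' \<le> p'" "p' \<le> hi'"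
    "covering A lo' hi'" "2 * (hi' - lo') - \<bar>p'\<bar> < 2 * (hi - lo) - \<bar>p\<bar>"
proof -
  have bounds: "lo \<le> 0" "0 \<le> hi" "lo \<le> p" "p \<le> hi" and px: "p mod int r = int x"
    and cov: "covering A lo hi"
    using sw unfolding sweep_def by auto
  have avoid: "\<exists>q. lo \<le> q \<and> q \<le> hi \<and> q \<noteq> p \<and> covers (nat (q mod int r)) i"
    if "i \<in> A" for i
    using cov px uncovered that unfolding covering_def by (metis nat_int)
  have covering_without_p: "covering A lo' hi'"
    if "lo \<le> lo'" "hi' \<le> hi" "\<And>q. lo \<le> q \<Longrightarrow> q \<le> hi \<Longrightarrow> q \<noteq> p \<Longrightarrow> lo' \<le> q \<and> q \<le> hi'"
    for lo' hi'
    unfolding covering_def by (metis avoid that(3))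
  consider "0 \<le> p" "p < hi" | "p \<le> 0" "lo < p" | "0 < p" "p = hi" | "p < 0" "p = lo"
    | "lo = 0" "hi = 0" "p = 0"
    using bounds by linarith
  then show ?thesis
  proof cases
    case 1
    then show ?thesis
      using that[of "p + 1" lo hi] bounds cov by auto
  next
    case 2
    then show ?thesis
      using that[of "p - 1" lo hi] bounds cov by auto
  next
    case 3
    have "covering A lo (p - 1)"
      using 3 by (intro covering_without_p) auto
    then show ?thesis
      using that[of "p - 1" lo "p - 1"] bounds 3 by auto
  next
    case 4
    have "covering A (p + 1) hi"
      using 4 by (intro covering_without_p) auto
    then show ?thesis
      using that[of "p + 1" "p + 1" hi] bounds 4 by auto
  next
    case 5
    then have "A = {}"
      using avoid by fastforce
    moreover have "x = 0"
      using px 5 by simp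
    ultimately show ?thesis
      using nonzero by simp
  qed
qed

lemma potential_descent:
  assumes "is_vertex n r v" "v \<noteq> ({}, 0)"
  shows "\<exists>w. rcr_adj n d r w v \<and> potential w < potential v"
proof -
  obtain A x where v: "v = (A, x)"
    by (cases v)
  have A: "A \<subseteq> {1..n}" "x < r"
    using assms(1) unfolding is_vertex_def v by auto
  show ?thesis
  proof (cases "\<exists>j\<in>A. covers x j")
    case True
    then obtain j k where j: "j \<in> A" "k \<in> {1..d}" "idx_mod n (k + d * x) = j"
      unfolding covers_def by blast
    have "flip (A - {j}) j = A"
      using j(1) unfolding flip_def by auto
    then have "rcr_adj n d r (A - {j}, x) (A, x)"
      unfolding rcr_adj_def is_vertex_def using A j by auto
    moreover have "potential (A - {j}, x) < potential (A, x)"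
      using ring_cost_mono[of "A - {j}", OF _ A] card_Diff1_less[OF finite_subset[OF A(1)] j(1)]
      by (simp add: potential_def)
    ultimately show ?thesis
      using v by blast
  next
    case False
    obtain lo hi p where sw: "sweep A x lo hi p"
      and cost: "int (ring_cost A x) = 2 * (hi - lo) - \<bar>p\<bar>"
      using ring_cost_attained[OF A] .
    obtain p' lo' hi' where p': "p' = p + 1 \<or> p' = p - 1"
      and bounds: "lo' \<le> 0" "0 \<le> hi'" "lo' \<le> p'" "p' \<le> hi'" and cov: "covering A lo' hi'"
      and shorter: "2 * (hi' - lo') - \<bar>p'\<bar> < 2 * (hi - lo) - \<bar>p\<bar>"
      using sweep_shorten[OF sw] False assms(2) v by blast
    define x' where "x' = nat (p' mod int r)"
    have sw': "sweep A x' lo' hi' p'"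
      unfolding sweep_def x'_def using bounds cov r_ge_3 by simp
    have px: "p mod int r = int x"
      using sw unfolding sweep_def by simp
    have "rcr_adj n d r (A, x') (A, x)"
      unfolding rcr_adj_def is_vertex_def x'_def using A ring_neighbour[OF px p'] by auto
    moreover have "potential (A, x') < potential (A, x)"
      using ring_cost_le[OF sw'] shorter cost by (simp add: potential_def x'_def)
    ultimately show ?thesis
      using v by blast
  qed
qed

lemma potential_origin: "potential ({}, 0) = 0"
proof -
  have "sweep {} 0 0 0 0"
    unfolding sweep_def covering_def by simp
  from ring_cost_le[OF this] show ?thesis
    unfolding potential_def by simp
qed

lemma potential_le_walk: "(rcr_adj n d r ^^ k) ({}, 0) v \<Longrightarrow> potential v \<le> k"
proof (induction k arbitrary: v)
  case 0
  then show ?case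
    using potential_origin by simp
next
  case (Suc k)
  then obtain u where "(rcr_adj n d r ^^ k) ({}, 0) u" "rcr_adj n d r u v"
    by (metis relpowp_Suc_E)
  then show ?case
    using Suc.IH potential_edge by fastforce
qed

lemma walk_of_potential: "is_vertex n r v \<Longrightarrow> (rcr_adj n d r ^^ potential v) ({}, 0) v"
proof (induction "potential v" arbitrary: v rule: less_induct)
  case less
  show ?case
  proof (cases "v = ({}, 0)")
    case True
    then show ?thesis
      using potential_origin by simp
  next
    case False
    then obtain w where w: "rcr_adj n d r w v" "potential w < potential v"
      using potential_descent less.prems by blast
    then have "potential v = Suc (potential w)"
      using potential_edge[OF w(1)] by simp
    moreover have "(rcr_adj n d r ^^ potential w) ({}, 0) w"
      using less.hyps w rcr_adj_def by blast
    ultimately show ?thesis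
      using w(1) by (metis relpowp_Suc_I)
  qed
qed

lemma rcr_dist_eq_potential: "is_vertex n r v \<Longrightarrow> rcr_dist n d r ({}, 0) v = potential v"
  unfolding rcr_dist_def using walk_of_potential potential_le_walk by (intro Least_equality) auto

text \<open>Every bit is covered either in \<open>[0, hi]\<close> or, after wrapping around the ring, in
  \<open>[lo, 0)\<close>.\<close>

definition split_covered :: "nat set \<Rightarrow> int \<Rightarrow> int \<Rightarrow> bool" where
  "split_covered A lo hi \<longleftrightarrow> (\<forall>i\<in>A. first_cover i \<le> hi \<or> int r + lo \<le> last_cover i)"

lemma covering_if_split_covered:
  assumes A: "A \<subseteq> {1..n}" and "lo \<le> 0" "0 \<le> hi" and split: "split_covered A lo hi"
  shows "covering A lo hi"
  unfolding covering_def
proof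
  fix i assume "i \<in> A"
  then have i: "i \<in> {1..n}"
    using A by auto
  show "\<exists>p. lo \<le> p \<and> p \<le> hi \<and> covers (nat (p mod int r)) i"
  proof (cases "first_cover i \<le> hi")
    case True
    moreover have "lo \<le> first_cover i"
      using assms(2) first_cover_nonneg[of i] by linarith
    ultimately show ?thesis
      using covers_first_cover[OF i] first_cover_less[OF i]
      by (intro exI[of _ "first_cover i"]) auto
  next
    case False
    then have "int r + lo \<le> last_cover i"
      using split \<open>i \<in> A\<close> unfolding split_covered_def by blast
    moreover have "(last_cover i - int r) mod int r = last_cover i"
      using last_cover_less[OF i] by simp
    ultimately show ?thesis
      using covers_last_cover[OF i] last_cover_less[OF i] assms(3)
      by (intro exI[of _ "last_cover i - int r"]) auto
  qed
qed

lemma split_covered_if_covering: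
  assumes A: "A \<subseteq> {1..n}" and "lo \<le> 0" "0 \<le> hi" "hi - lo < int r" and cov: "covering A lo hi"
  shows "split_covered A lo hi"
  unfolding split_covered_def
proof
  fix i assume "i \<in> A"
  then have i: "i \<in> {1..n}"
    using A by auto
  obtain p where p: "lo \<le> p" "p \<le> hi" "covers (nat (p mod int r)) i"
    using cov \<open>i \<in> A\<close> unfolding covering_def by blast
  show "first_cover i \<le> hi \<or> int r + lo \<le> last_cover i"
  proof (cases "0 \<le> p")
    case True
    then have "p mod int r = p"
      using p assms(2,4) by simp
    moreover have "nat p < r"
      using True p assms(2,4) by linarith
    moreover have "covers (nat p) i"
      using p(3) \<open>p mod int r = p\<close> by simp
    ultimately have "first_cover i \<le> int (nat p)"
      using covers_between_covers(1)[OF _ _ i] by blast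
    then show ?thesis
      using True p by simp
  next
    case False
    have wrapped: "0 \<le> p + int r" "p + int r < int r"
      using False p assms(3,4) by linarith+
    have "p mod int r = (p + int r) mod int r"
      by simp
    also have "\<dots> = p + int r"
      using wrapped by (rule mod_pos_pos_trivial)
    finally have "covers (nat (p + int r)) i"
      using p(3) by simp
    moreover have "nat (p + int r) < r"
      using wrapped by linarith
    ultimately have "int (nat (p + int r)) \<le> last_cover i"
      using covers_between_covers(2)[OF _ _ i] by blast
    then show ?thesis
      using wrapped p by simp
  qed
qed

abbreviation ceil_nd :: int where
  "ceil_nd \<equiv> int ((n + d - 1) div d)"

text \<open>\<open>L ! (t - 1)\<close> is the \<open>t\<close>-th bit \<open>i\<^sub>t\<close> of \<open>a\<close>. Each element \<open>(lo, hi)\<close> of \<open>C\<close>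
  is a window realising one of the terms in the maximum defining \<open>leap\<^sub>1(a, x)\<close> as
  \<open>\<lceil>n/d\<rceil> - (hi - lo)\<close>.\<close>

context
  fixes a :: "nat set" and x :: nat
    and L :: "nat list" and s :: nat and y z :: "nat \<Rightarrow> int" and h :: nat
    and C :: "(int \<times> int) set"
  assumes a_sub: "a \<subseteq> {1..n}"
  defines L_def: "L \<equiv> sorted_list_of_set a"
    and s_def: "s \<equiv> length L"
    and y_def: "y \<equiv> \<lambda>t. if t = 0 then 0 else int ((L ! (t - 1) - 1) div d)"
    and z_def: "z \<equiv> \<lambda>t. int ((L ! (t - 1) + d * r - n - 1) div d)"
    and h_def: "h \<equiv> LEAST k. 1 \<le> k \<and> k \<le> s \<and> y (k - 1) \<le> int x \<and> int x < y k"
    and C_def: "C \<equiv> if s = 0 \<or> y s \<le> int x then {(0, int x)}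
      else {(z h - int r, int x)} \<union> {(z j - int r, y (j - 1)) | j. h < j \<and> j \<le> s} \<union> {(0, y s)}"
begin

lemma leap1_eq_Max: "leap1 n d r a x = Max ((\<lambda>(lo, hi). ceil_nd - (hi - lo)) ` C)"
proof -
  have leap1_unfolded: "leap1 n d r a x = (if s = 0 \<or> y s \<le> int x then ceil_nd - int x
      else Max ({y h - int x + (z h - y h - int r + ceil_nd)}
        \<union> {y j - y (j - 1) + (z j - y j - int r + ceil_nd) | j. h < j \<and> j \<le> s}
        \<union> {ceil_nd - y s}))"
    unfolding leap1_def Let_def L_def s_def y_def z_def h_def by (rule refl)
  show ?thesis
  proof (cases "s = 0 \<or> y s \<le> int x")
    case True
    then show ?thesis
      unfolding leap1_unfolded C_def by simp
  next
    case False
    have "(\<lambda>(lo, hi). ceil_nd - (hi - lo)) ` {(z j - int r, y (j - 1)) | j. h < j \<and> j \<le> s}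
        = {y j - y (j - 1) + (z j - y j - int r + ceil_nd) | j. h < j \<and> j \<le> s}"
      unfolding image_Collect by force
    moreover have "(\<lambda>(lo, hi). ceil_nd - (hi - lo)) (z h - int r, int x)
        = y h - int x + (z h - y h - int r + ceil_nd)"
      by simp
    moreover have "(\<lambda>(lo, hi). ceil_nd - (hi - lo)) (0, y s) = ceil_nd - y s"
      by simp
    ultimately have "(\<lambda>(lo, hi). ceil_nd - (hi - lo)) ` C
        = {y h - int x + (z h - y h - int r + ceil_nd)}
          \<union> {y j - y (j - 1) + (z j - y j - int r + ceil_nd) | j. h < j \<and> j \<le> s}
          \<union> {ceil_nd - y s}"
      unfolding C_def if_not_P[OF False] image_Un image_insert image_empty by (simp only:)
    then show ?thesis
      unfolding leap1_unfolded if_not_P[OF False] by (simp only:)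
  qed
qed

lemma nth_bit_mem: "1 \<le> t \<Longrightarrow> t \<le> s \<Longrightarrow> L ! (t - 1) \<in> a"
proof -
  assume "1 \<le> t" "t \<le> s"
  then have "L ! (t - 1) \<in> set L"
    unfolding s_def by (intro nth_mem) simp
  then show ?thesis
    using finite_subset[OF a_sub] unfolding L_def by simp
qed

lemma nth_bit_exists: "i \<in> a \<Longrightarrow> \<exists>t. 1 \<le> t \<and> t \<le> s \<and> L ! (t - 1) = i"
proof -
  assume "i \<in> a"
  then have "i \<in> set L"
    using finite_subset[OF a_sub] unfolding L_def by simp
  then obtain k where "k < length L" "L ! k = i"
    by (auto simp: in_set_conv_nth)
  then show ?thesis
    unfolding s_def by (intro exI[of _ "k + 1"]) auto
qed

lemma y_eq_first_cover: "1 \<le> t \<Longrightarrow> y t = first_cover (L ! (t - 1))"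
  unfolding y_def first_cover_def by simp

lemma z_eq_last_cover: "z t = last_cover (L ! (t - 1))"
  unfolding z_def last_cover_def by simp

lemma nth_bit_mono: "1 \<le> t \<Longrightarrow> t \<le> t' \<Longrightarrow> t' \<le> s \<Longrightarrow> L ! (t - 1) \<le> L ! (t' - 1)"
proof -
  have "sorted L"
    unfolding L_def by simp
  then show "1 \<le> t \<Longrightarrow> t \<le> t' \<Longrightarrow> t' \<le> s \<Longrightarrow> L ! (t - 1) \<le> L ! (t' - 1)"
    unfolding s_def by (intro sorted_nth_mono) auto
qed

lemma y_mono:
  assumes "t \<le> t'" "t' \<le> s" shows "y t \<le> y t'"
proof (cases "t = 0")
  case False
  then have "L ! (t - 1) - 1 \<le> L ! (t' - 1) - 1"
    using nth_bit_mono[of t t'] assms by simp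
  then show ?thesis
    unfolding y_def using False assms by (simp add: div_le_mono)
qed (simp add: y_def)

lemma z_mono:
  assumes "1 \<le> t" "t \<le> t'" "t' \<le> s" shows "z t \<le> z t'"
proof -
  have "L ! (t - 1) + d * r - n - 1 \<le> L ! (t' - 1) + d * r - n - 1"
    using nth_bit_mono[OF assms] by simp
  then show ?thesis
    unfolding z_def by (simp add: div_le_mono)
qed

lemma z_less_r: "1 \<le> t \<Longrightarrow> t \<le> s \<Longrightarrow> z t < int r"
  using last_cover_less nth_bit_mem a_sub unfolding z_eq_last_cover by blast

lemma y_crossing:
  assumes "0 \<le> c" "c < y s"
  obtains j where "1 \<le> j" "j \<le> s" "y (j - 1) \<le> c" "c < y j"
proof -
  have "\<not> c < y 0"
    using assms(1) unfolding y_def by simp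
  then obtain k where "k < s" "\<forall>i\<le>k. \<not> c < y i" "c < y (Suc k)"
    using ex_least_nat_less[of "\<lambda>t. c < y t", OF assms(2)] by blast
  moreover from this(2) have "y k \<le> c"
    by (simp add: not_less)
  ultimately show ?thesis
    using that[of "Suc k"] by simp
qed

lemma h_props:
  assumes "\<not> (s = 0 \<or> y s \<le> int x)"
  shows "1 \<le> h" "h \<le> s" "y (h - 1) \<le> int x" "int x < y h"
proof -
  have "0 \<le> int x" "int x < y s"
    using assms by simp_all
  then obtain j where "1 \<le> j" "j \<le> s" "y (j - 1) \<le> int x" "int x < y j"
    by (rule y_crossing)
  then have "\<exists>k. 1 \<le> k \<and> k \<le> s \<and> y (k - 1) \<le> int x \<and> int x < y k"
    by blast
  then have "1 \<le> h \<and> h \<le> s \<and> y (h - 1) \<le> int x \<and> int x < y h"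
    unfolding h_def by (rule LeastI_ex)
  then show "1 \<le> h" "h \<le> s" "y (h - 1) \<le> int x" "int x < y h"
    by auto
qed

lemma finite_candidates: "finite C"
proof -
  have "finite {j. h < j \<and> j \<le> s}"
    by (rule finite_subset[of _ "{..s}"]) auto
  then have "finite {(z j - int r, y (j - 1)) | j. h < j \<and> j \<le> s}"
    by (rule finite_image_set)
  then show ?thesis
    unfolding C_def by simp
qed

lemma candidates_nonempty: "C \<noteq> {}"
  unfolding C_def by simp

text \<open>Bits before the \<open>j\<close>-th are covered from the right, the others through the
  wrap-around, since \<open>y\<close> and \<open>z\<close> are monotone along the sorted bits.\<close>

lemma split_covered_at:
  assumes "1 \<le> j" "j \<le> s" "y (j - 1) \<le> hi"
  shows "split_covered a (z j - int r) hi"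
  unfolding split_covered_def
proof
  fix i assume "i \<in> a"
  then obtain t where t: "1 \<le> t" "t \<le> s" "L ! (t - 1) = i"
    using nth_bit_exists by blast
  show "first_cover i \<le> hi \<or> int r + (z j - int r) \<le> last_cover i"
  proof (cases "t < j")
    case True
    then have "y t \<le> y (j - 1)"
      using assms y_mono by simp
    then show ?thesis
      using assms t y_eq_first_cover[of t] by auto
  next
    case False
    then have "z j \<le> z t"
      using assms t z_mono by simp
    then show ?thesis
      using t z_eq_last_cover[of t] by auto
  qed
qed

lemma split_covered_right: "(\<And>t. 1 \<le> t \<Longrightarrow> t \<le> s \<Longrightarrow> y t \<le> hi) \<Longrightarrow> split_covered a lo hi"
  unfolding split_covered_def using nth_bit_exists y_eq_first_cover by force

lemma candidate_split_covered:
  assumes "(lo, hi) \<in> C" shows "lo \<le> 0" "int x \<le> hi" "split_covered a lo hi"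
proof -
  have "lo \<le> 0 \<and> int x \<le> hi \<and> split_covered a lo hi"
  proof (cases "s = 0 \<or> y s \<le> int x")
    case True
    then have "y t \<le> int x" if "1 \<le> t" "t \<le> s" for t
      using y_mono[of t s] that by auto
    then show ?thesis
      using assms True by (auto simp: C_def intro!: split_covered_right)
  next
    case False
    note h = h_props[OF False]
    consider "lo = z h - int r" "hi = int x"
      | j where "h < j" "j \<le> s" "lo = z j - int r" "hi = y (j - 1)"
      | "lo = 0" "hi = y s"
      using assms False unfolding C_def by auto
    then show ?thesis
    proof cases
      case 1
      then show ?thesis
        using h z_less_r[of h] split_covered_at[of h "int x"] by simp
    next
      case (2 j)
      moreover have "y h \<le> y (j - 1)"
        using y_mono 2 by simp
      ultimately show ?thesis
        using h z_less_r[of j] split_covered_at[of j "y (j - 1)"] by simp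
    next
      case 3
      then show ?thesis
        using False y_mono by (auto intro!: split_covered_right)
    qed
  qed
  then show "lo \<le> 0" "int x \<le> hi" "split_covered a lo hi"
    by auto
qed

lemma first_wrapping_bit:
  assumes "0 \<le> hi" "hi < y s" and split: "split_covered a lo hi"
  obtains j where "1 \<le> j" "j \<le> s" "y (j - 1) \<le> hi" "hi < y j" "int r + lo \<le> z j"
proof -
  obtain j where j: "1 \<le> j" "j \<le> s" "y (j - 1) \<le> hi" "hi < y j"
    using assms(1,2) by (rule y_crossing)
  then have "\<not> first_cover (L ! (j - 1)) \<le> hi"
    using y_eq_first_cover by simp
  moreover have "first_cover (L ! (j - 1)) \<le> hi \<or> int r + lo \<le> last_cover (L ! (j - 1))"
    using split nth_bit_mem[OF j(1,2)] unfolding split_covered_def by blast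
  ultimately have "int r + lo \<le> z j"
    using z_eq_last_cover by simp
  with j that show ?thesis
    by blast
qed

lemma candidate_narrower:
  assumes lo: "lo \<le> 0" and hi: "int x \<le> hi" and split: "split_covered a lo hi"
  obtains lo' hi' where "(lo', hi') \<in> C" "hi' - lo' \<le> hi - lo"
proof (cases "s = 0 \<or> y s \<le> int x")
  case True
  then have "(0, int x) \<in> C"
    unfolding C_def by simp
  with that show ?thesis
    using lo hi by simp
next
  case False
  note h = h_props[OF False]
  show ?thesis
  proof (cases "y s \<le> hi")
    case True
    have "(0, y s) \<in> C"
      using False unfolding C_def by simp
    with that show ?thesis
      using lo True by simp
  next
    case beyond: False
    have "0 \<le> hi" "hi < y s"
      using hi beyond by simp_all
    then obtain j where j: "1 \<le> j" "j \<le> s" "y (j - 1) \<le> hi" "hi < y j" "int r + lo \<le> z j"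
      using split by (rule first_wrapping_bit)
    have "\<not> j < h"
    proof
      assume "j < h"
      then have "y j \<le> y (h - 1)"
        using y_mono h by simp
      then show False
        using h j hi by linarith
    qed
    then consider "h = j" | "h < j"
      by linarith
    then show ?thesis
    proof cases
      case 1
      then have "(z h - int r, int x) \<in> C"
        using False unfolding C_def by simp
      with that show ?thesis
        using 1 j hi by simp
    next
      case 2
      then have "(z j - int r, y (j - 1)) \<in> {(z j - int r, y (j - 1)) | j. h < j \<and> j \<le> s}"
        using j by blast
      then have "(z j - int r, y (j - 1)) \<in> C"
        using False unfolding C_def by simp
      with that show ?thesis
        using j by simp
    qed
  qed
qed

lemma leap1_ge:
  assumes "lo \<le> 0" "int x \<le> hi" "split_covered a lo hi"
  shows "ceil_nd - (hi - lo) \<le> leap1 n d r a x"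
proof -
  obtain lo' hi' where "(lo', hi') \<in> C" "hi' - lo' \<le> hi - lo"
    using candidate_narrower[OF assms] .
  then have "ceil_nd - (hi - lo) \<le> (\<lambda>(lo, hi). ceil_nd - (hi - lo)) (lo', hi')"
    by simp
  also have "\<dots> \<le> leap1 n d r a x"
    unfolding leap1_eq_Max using finite_candidates \<open>(lo', hi') \<in> C\<close> by (intro Max_ge) auto
  finally show ?thesis .
qed

lemma leap1_attained:
  obtains lo hi where "lo \<le> 0" "int x \<le> hi" "hi - lo = ceil_nd - leap1 n d r a x"
    "split_covered a lo hi"
proof -
  have "leap1 n d r a x \<in> (\<lambda>(lo, hi). ceil_nd - (hi - lo)) ` C"
    unfolding leap1_eq_Max using finite_candidates candidates_nonempty by (intro Max_in) auto
  then obtain lo hi where "(lo, hi) \<in> C" "leap1 n d r a x = ceil_nd - (hi - lo)"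
    by auto
  then show ?thesis
    using that[of lo hi] candidate_split_covered[of lo hi] by simp
qed

end

lemma leap1_width_bound:
  assumes a: "a \<subseteq> {1..n}" and x: "x \<le> r div 2"
  shows "2 * (ceil_nd - leap1 n d r a x) \<le> int r"
proof -
  define M where "M = max (int x) (int ((n - 1) div d))"
  have "split_covered a 0 M"
    unfolding split_covered_def M_def using a first_cover_le_max by fastforce
  then have "ceil_nd - M \<le> leap1 n d r a x"
    using leap1_ge[OF a, of 0 x M] unfolding M_def by simp
  moreover have "d * ((n - 1) div d) \<le> n - 1"
    by simp
  then have "d * (2 * ((n - 1) div d)) < d * r"
    using dr_ge_2n n_ge_2 by linarith
  then have "2 * M \<le> int r"
    using x unfolding M_def by (auto simp: max_def)
  ultimately show ?thesis
    by simp
qed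

lemma sweep_cost_ge_if_long:
  assumes sw: "sweep A x lo hi p" and long: "p \<noteq> int x \<or> int r \<le> hi - lo"
  shows "int r - int x \<le> 2 * (hi - lo) - \<bar>p\<bar>"
proof -
  have width: "\<bar>p\<bar> \<le> hi - lo" and px: "p mod int r = int x"
    using sw unfolding sweep_def by auto
  from long show ?thesis
  proof
    assume "p \<noteq> int x"
    have p: "p = int r * (p div int r) + int x"
      using px by (metis div_mult_mod_eq mult.commute)
    then have "p div int r \<noteq> 0"
      using \<open>p \<noteq> int x\<close> by auto
    then have "int r * 1 \<le> int r * \<bar>p div int r\<bar>"
      by (intro mult_left_mono) auto
    then have "int r \<le> \<bar>p - int x\<bar>"
      using p by (simp add: abs_mult)
    also have "\<dots> \<le> \<bar>p\<bar> + int x"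
      using abs_triangle_ineq4[of p "int x"] by simp
    finally show ?thesis
      using width by (simp add: algebra_simps)
  next
    assume "int r \<le> hi - lo"
    then show ?thesis
      using width by (simp add: algebra_simps)
  qed
qed

lemma ring_cost_formula:
  assumes a: "a \<subseteq> {1..n}" and x: "x \<le> r div 2"
  shows "int (ring_cost a x) = 2 * ceil_nd - int x - 2 * leap1 n d r a x"
proof (rule antisym)
  have xr: "x < r"
    using x r_ge_3 by linarith
  obtain lo hi where lh: "lo \<le> 0" "int x \<le> hi" "hi - lo = ceil_nd - leap1 n d r a x"
    and split: "split_covered a lo hi"
    using leap1_attained[OF a] .
  have "sweep a x lo hi (int x)"
    unfolding sweep_def using lh xr covering_if_split_covered[OF a _ _ split] by simp
  from ring_cost_le[OF this] lh
  show "int (ring_cost a x) \<le> 2 * ceil_nd - int x - 2 * leap1 n d r a x"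
    by simp
  obtain lo' hi' p where sw: "sweep a x lo' hi' p"
    and cost: "int (ring_cost a x) = 2 * (hi' - lo') - \<bar>p\<bar>"
    using ring_cost_attained[OF a xr] .
  show "2 * ceil_nd - int x - 2 * leap1 n d r a x \<le> int (ring_cost a x)"
  proof (cases "p = int x \<and> hi' - lo' < int r")
    case True
    then have "split_covered a lo' hi'"
      using sw split_covered_if_covering[OF a] unfolding sweep_def by blast
    then have "ceil_nd - (hi' - lo') \<le> leap1 n d r a x"
      using leap1_ge[OF a] sw True unfolding sweep_def by blast
    then show ?thesis
      using True cost by simp
  next
    case False
    then have "p \<noteq> int x \<or> int r \<le> hi' - lo'"
      by linarith
    then have "int r - int x \<le> int (ring_cost a x)"
      using sweep_cost_ge_if_long[OF sw] cost by simp
    then show ?thesis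
      using leap1_width_bound[OF a x] by (simp add: algebra_simps)
  qed
qed

end

theorem mainTheorem8:
  fixes n d r x :: nat and a :: "nat set"
  assumes "n \<ge> 2" and "d \<ge> 1" and "r \<ge> 3" and "n \<ge> d"
    and "(d * r) mod n = 0" and "d * r \<ge> 2 * n"
    and "a \<subseteq> {1..n}" and "x \<le> r div 2"
  shows "int (rcr_dist n d r ({}, 0) (a, x))
           = int (card a) + 2 * int ((n + d - 1) div d) - int x - 2 * leap1 n d r a x"
proof -
  interpret rcr_params n d r
    using assms by unfold_locales auto
  have "is_vertex n r (a, x)"
    unfolding is_vertex_def using assms(3,7,8) by simp
  then have "rcr_dist n d r ({}, 0) (a, x) = card a + ring_cost a x"
    by (simp add: rcr_dist_eq_potential potential_def)
  then show ?thesis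
    using ring_cost_formula[OF assms(7,8)] by simp
qed

end
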